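(* Let $0<p<1/2$, $c>0$, and $n$ such that $k=c\log_2 n$ is an integer with $k\ge2$. Let $\epsilon_n>0$, $\delta\in(0,1)$, and let $\mathcal A\subseteq\{0,1\}^n$ be such that $\|K_s-K_{s'}\|_\infty\ge 2\epsilon_n$ for all distinct $s,s'\in\mathcal A$. Then there is a procedure which, given $T\ge \ln\!\left(\frac{2n^{1+c}}{\delta}\right)\epsilon_n^{-2} f_c(n)$ independent traces of an unknown source string $s\in\mathcal A$, outputs $s$ with probability at least $1-\delta$.
   Context: Deletion channel: for $s\in\{0,1\}^n$ and deletion probability $p\in[0,1)$, a trace of $s$ is obtained by deleting each bit of $s$ independently with probability $p$; distinct traces are independent. Strings are indexed from 1 and $s[a:b]=(s[a],\dots,s[b])$. For $x\in\{0,1\}^k$ and $i\in\{1,\dots,n-k+1\}$, $K_{s,x}[i]=\sum_{j=1}^{n-k+1}\binom{j-1}{i-1}(1-p)^{i-1}p^{j-i}\,\mathbb 1\{s[j:j+k-1]=x\}$ (with $\binom{j-1}{i-1}=0$ if $j<i$); $K_s$ is the concatenation of $K_{s,x}$ over all $x\in\{0,1\}^k$ and $\|\cdot\|_\infty$ is the maximum absolute entry. $H$ is the binary entropy (base 2). $\alpha_c(p)=1+c\log_2\frac{1-p}{p}+\frac{cH(1-\frac{p}{1-p})+c\log_2\frac{p}{1-p}}{1-\frac{p}{1-p}}$ and $f_c(n)=\frac{(1+2n^{\alpha_c(p)})^2}{2n^{2c\log_2(1-p)-1}}$. *)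

theory Defs
  imports "HOL-Probability.Probability"
begin

text \<open>Binary strings are boolean lists. One trace of the deletion channel with deletion
probability p: each bit is kept independently with probability 1 - p.\<close>

fun trace_pmf :: "real \<Rightarrow> bool list \<Rightarrow> bool list pmf" where
  "trace_pmf p [] = return_pmf []"
| "trace_pmf p (b # bs) =
     bind_pmf (bernoulli_pmf (1 - p)) (\<lambda>keep.
     bind_pmf (trace_pmf p bs) (\<lambda>rest.
     return_pmf (if keep then b # rest else rest)))"

fun traces_pmf :: "real \<Rightarrow> nat \<Rightarrow> bool list \<Rightarrow> bool list list pmf" where
  "traces_pmf p 0 s = return_pmf []"
| "traces_pmf p (Suc T) s =
     bind_pmf (trace_pmf p s) (\<lambda>t.
     bind_pmf (traces_pmf p T s) (\<lambda>ts.
     return_pmf (t # ts)))"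

text \<open>Substring s[a:b] with 1-based indexing.\<close>

definition substr :: "bool list \<Rightarrow> nat \<Rightarrow> nat \<Rightarrow> bool list" where
  "substr s a b = take (b + 1 - a) (drop (a - 1) s)"

definition Kfun :: "real \<Rightarrow> nat \<Rightarrow> bool list \<Rightarrow> bool list \<Rightarrow> nat \<Rightarrow> real" where
  "Kfun p k s x i =
     (\<Sum>j = 1..length s - k + 1.
        real ((j - 1) choose (i - 1)) * (1 - p) ^ (i - 1) * p ^ (j - i)
        * (if substr s j (j + k - 1) = x then 1 else 0))"

text \<open>Sup-norm of K_s - K_s' (the concatenation over all x of length k).\<close>

definition K_dist :: "real \<Rightarrow> nat \<Rightarrow> bool list \<Rightarrow> bool list \<Rightarrow> real" where
  "K_dist p k s s' =
     Max {\<bar>Kfun p k s x i - Kfun p k s' x i\<bar> | x i.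
            length x = k \<and> i \<in> {1..length s - k + 1}}"

definition bin_entropy :: "real \<Rightarrow> real" where
  "bin_entropy x = - x * log 2 x - (1 - x) * log 2 (1 - x)"

definition alpha_c :: "real \<Rightarrow> real \<Rightarrow> real" where
  "alpha_c c p = 1 + c * log 2 ((1 - p) / p)
     + (c * bin_entropy (1 - p / (1 - p)) + c * log 2 (p / (1 - p))) / (1 - p / (1 - p))"

definition f_c :: "real \<Rightarrow> real \<Rightarrow> nat \<Rightarrow> real" where
  "f_c c p n = (1 + 2 * real n powr alpha_c c p) ^ 2
     / (2 * real n powr (2 * c * log 2 (1 - p) - 1))"

end

theory Submission
  imports Defs
begin

text \<open>With \<open>r = p/(1-p)\<close>, sum over the embeddings of a pattern \<open>x\<close> (\<open>|x| = k\<close>) into a trace that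
  start at position \<open>i\<close>, weighting an embedding with total gap \<open>g\<close> by \<open>(-r)^g\<close>. Because
  \<open>(1-p)(-r) + p = 0\<close>, deleted bits between the matched ones contribute nothing in expectation, and
  this statistic, rescaled by \<open>(1-p)^-k\<close>, has mean exactly \<open>K\<^sub>s\<^sub>,\<^sub>x[i]\<close>. It is bounded by
  \<open>B = (1-r)^-(k-1) (1-p)^-k\<close>, so by Hoeffding's inequality its empirical mean over \<open>T\<close> traces misses
  \<open>K\<^sub>s\<^sub>,\<^sub>x[i]\<close> by \<open>\<epsilon>\<close> with probability at most \<open>2 exp(-T\<epsilon>^2/(2B^2))\<close>. Since \<open>2B^2 \<le> f\<^sub>c(n)\<close>, a union
  bound over the \<open>2^k (n-k+1) \<le> n^(1+c)\<close> coordinates shows that with probability at least \<open>1 - \<delta>\<close> all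
  estimates are \<open>\<epsilon>\<close>-close to \<open>K\<^sub>s\<close>; as distinct candidates are \<open>2\<epsilon>\<close>-apart in sup-norm, \<open>s\<close> is then the
  only candidate \<open>\<epsilon>\<close>-close to the estimates.\<close>


section \<open>Traces\<close>

lemma finite_set_pmf_trace: "finite (set_pmf (trace_pmf p s))"
  by (induction s) auto

lemma expectation_bind_pmf_finite:
  fixes h :: "'b \<Rightarrow> real"
  assumes "finite (set_pmf M)" "\<And>x. x \<in> set_pmf M \<Longrightarrow> finite (set_pmf (f x))"
  shows "measure_pmf.expectation (bind_pmf M f) h
       = measure_pmf.expectation M (\<lambda>x. measure_pmf.expectation (f x) h)"
  using assms by (subst pmf_expectation_bind[of "set_pmf M"])
    (auto simp: integral_measure_pmf[of "set_pmf M"] mult.commute)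

lemma expectation_trace_Cons:
  fixes \<phi> :: "bool list \<Rightarrow> real"
  assumes "0 \<le> p" "p \<le> 1"
  shows "measure_pmf.expectation (trace_pmf p (b # s)) \<phi>
    = (1 - p) * measure_pmf.expectation (trace_pmf p s) (\<lambda>t. \<phi> (b # t))
      + p * measure_pmf.expectation (trace_pmf p s) \<phi>"
proof -
  have "measure_pmf.expectation (trace_pmf p (b # s)) \<phi>
      = measure_pmf.expectation (bernoulli_pmf (1 - p)) (\<lambda>keep. measure_pmf.expectation
          (bind_pmf (trace_pmf p s) (\<lambda>t. return_pmf (if keep then b # t else t))) \<phi>)"
    by (simp only: trace_pmf.simps, rule expectation_bind_pmf_finite) (auto simp: finite_set_pmf_trace)
  also have "\<dots> = measure_pmf.expectation (bernoulli_pmf (1 - p)) (\<lambda>keep. measure_pmf.expectation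
          (trace_pmf p s) (\<lambda>t. \<phi> (if keep then b # t else t)))"
    by (subst expectation_bind_pmf_finite) (auto simp: finite_set_pmf_trace)
  finally show ?thesis using assms by (simp add: algebra_simps)
qed

declare trace_pmf.simps(2) [simp del]


section \<open>An unbiased estimator of \<open>K\<^sub>s\<close>\<close>

text \<open>\<open>est_at r x t\<close> is the weighted count of the embeddings of \<open>x\<close> into \<open>t\<close> that start at the head
  of \<open>t\<close>, an embedding with total gap \<open>g\<close> having weight \<open>(-r)^g\<close>.\<close>

primrec est_at :: "real \<Rightarrow> bool list \<Rightarrow> bool list \<Rightarrow> real" where
  "est_at r [] t = 0"
| "est_at r (a # z) t = (case t of [] \<Rightarrow> 0 | b # t' \<Rightarrow>
     if a = b then (if z = [] then 1 else (\<Sum>e<length t'. (-r) ^ e * est_at r z (drop e t'))) else 0)"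

definition est_from :: "real \<Rightarrow> bool list \<Rightarrow> bool list \<Rightarrow> real" where
  "est_from r y t = (\<Sum>e<length t. (-r) ^ e * est_at r y (drop e t))"

lemma est_at_Cons_Cons [simp]:
  "est_at r (a # z) (b # t) = (if a = b then (if z = [] then 1 else est_from r z t) else 0)"
  by (simp add: est_from_def)

lemma est_at_Nil_right [simp]: "est_at r x [] = 0"
  by (cases x) auto

declare est_at.simps(2) [simp del]

lemma est_from_Nil [simp]: "est_from r y [] = 0"
  by (simp add: est_from_def)

lemma est_from_Cons: "est_from r y (b # t) = est_at r y (b # t) + (-r) * est_from r y t"
  unfolding est_from_def length_Cons sum.lessThan_Suc_shift
  by (simp add: sum_distrib_left mult.assoc)

lemma expectation_est_at_Cons:
  assumes est_from: "\<And>z. z \<noteq> [] \<Longrightarrow> measure_pmf.expectation M (est_from r z)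
                                      = (1 - p) ^ length z * (if take (length z) s = z then 1 else 0)"
    and "y \<noteq> []"
  shows "measure_pmf.expectation M (\<lambda>t. est_at r y (b # t))
       = (1 - p) ^ (length y - 1) * (if take (length y) (b # s) = y then 1 else 0)"
proof (cases y)
  case (Cons a z)
  then show ?thesis
    by (cases "z = []"; cases "a = b") (simp_all add: est_from)
qed (use assms in simp)

lemma expectation_est_from:
  assumes p: "0 < p" "p < 1" and r: "r = p / (1 - p)" and "y \<noteq> []"
  shows "measure_pmf.expectation (trace_pmf p s) (est_from r y)
       = (1 - p) ^ length y * (if take (length y) s = y then 1 else 0)"
  using \<open>y \<noteq> []\<close>
proof (induction s arbitrary: y)
  case (Cons b s)
  have cancel: "(1 - p) * (- r) + p = 0"
    using p unfolding r by (simp add: field_simps)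
  have "measure_pmf.expectation (trace_pmf p (b # s)) (est_from r y)
      = (1 - p) * measure_pmf.expectation (trace_pmf p s) (\<lambda>t. est_at r y (b # t))
        + ((1 - p) * (-r) + p) * measure_pmf.expectation (trace_pmf p s) (est_from r y)"
    using p by (simp add: expectation_trace_Cons est_from_Cons integrable_measure_pmf_finite
        finite_set_pmf_trace algebra_simps)
  also have "\<dots> = (1 - p) * measure_pmf.expectation (trace_pmf p s) (\<lambda>t. est_at r y (b # t))"
    by (simp only: cancel mult_zero_left add_0_right)
  also have "\<dots> = (1 - p) * ((1 - p) ^ (length y - 1) * (if take (length y) (b # s) = y then 1 else 0))"
    by (subst expectation_est_at_Cons[OF _ Cons.prems]) (use Cons.IH in auto)
  also have "\<dots> = (1 - p) ^ length y * (if take (length y) (b # s) = y then 1 else 0)"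
    using Cons.prems by (cases y) auto
  finally show ?case .
qed simp

definition shift_weight :: "real \<Rightarrow> nat \<Rightarrow> nat \<Rightarrow> real" where
  "shift_weight p i j = real (j choose i) * (1 - p) ^ i * p ^ (j - i)"

lemma shift_weight_0_right: "shift_weight p i 0 = (if i = 0 then 1 else 0)"
  by (simp add: shift_weight_def)

lemma shift_weight_0_Suc: "shift_weight p 0 (Suc j) = p * shift_weight p 0 j"
  by (simp add: shift_weight_def)

lemma shift_weight_Suc_Suc:
  "shift_weight p (Suc i) (Suc j) = (1 - p) * shift_weight p i j + p * shift_weight p (Suc i) j"
proof (cases "Suc i \<le> j")
  case True
  then have "j - i = Suc (j - Suc i)" by simp
  then show ?thesis using True by (simp add: shift_weight_def algebra_simps)
next
  case False
  then show ?thesis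
    by (cases "j = i") (auto simp: shift_weight_def binomial_eq_0)
qed

text \<open>A 0-based form of \<open>Kfun\<close>. Its sum runs over all start positions \<open>j < length s\<close> (those too
  close to the end contribute 0), which gives it a simple recursion on \<open>s\<close>.\<close>

definition Kfun0 :: "real \<Rightarrow> bool list \<Rightarrow> bool list \<Rightarrow> nat \<Rightarrow> real" where
  "Kfun0 p x s i = (\<Sum>j<length s. shift_weight p i j * (if take (length x) (drop j s) = x then 1 else 0))"

lemma Kfun0_Nil [simp]: "Kfun0 p x [] i = 0"
  by (simp add: Kfun0_def)

lemma Kfun0_Cons_0:
  "Kfun0 p x (b # s) 0 = (if take (length x) (b # s) = x then 1 else 0) + p * Kfun0 p x s 0"
  unfolding Kfun0_def length_Cons sum.lessThan_Suc_shift
  by (simp add: shift_weight_0_right shift_weight_0_Suc sum_distrib_left mult.assoc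
      del: sum_mult_of_bool_eq)

lemma Kfun0_Cons_Suc:
  "Kfun0 p x (b # s) (Suc i) = (1 - p) * Kfun0 p x s i + p * Kfun0 p x s (Suc i)"
proof -
  let ?I = "\<lambda>j. (if take (length x) (drop j s) = x then 1 else 0) :: real"
  have "Kfun0 p x (b # s) (Suc i) = (\<Sum>j<length s. shift_weight p (Suc i) (Suc j) * ?I j)"
    unfolding Kfun0_def length_Cons sum.lessThan_Suc_shift by (simp add: shift_weight_0_right)
  also have "\<dots> = (1 - p) * (\<Sum>j<length s. shift_weight p i j * ?I j)
                  + p * (\<Sum>j<length s. shift_weight p (Suc i) j * ?I j)"
    unfolding shift_weight_Suc_Suc
    by (simp add: sum.distrib sum_distrib_left ring_distribs mult.assoc del: sum_mult_of_bool_eq)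
  finally show ?thesis unfolding Kfun0_def .
qed

lemma expectation_est_at_drop:
  assumes p: "0 < p" "p < 1" and r: "r = p / (1 - p)" and "x \<noteq> []"
  shows "measure_pmf.expectation (trace_pmf p s) (\<lambda>t. est_at r x (drop i t))
       = (1 - p) ^ length x * Kfun0 p x s i"
proof (induction s arbitrary: i)
  case (Cons b s)
  have step: "measure_pmf.expectation (trace_pmf p (b # s)) (\<lambda>t. est_at r x (drop i t))
      = (1 - p) * measure_pmf.expectation (trace_pmf p s) (\<lambda>t. est_at r x (drop i (b # t)))
        + p * measure_pmf.expectation (trace_pmf p s) (\<lambda>t. est_at r x (drop i t))"
    using p by (simp add: expectation_trace_Cons)
  show ?case
  proof (cases i)
    case 0
    have head: "measure_pmf.expectation (trace_pmf p s) (\<lambda>t. est_at r x (b # t))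
        = (1 - p) ^ (length x - 1) * (if take (length x) (b # s) = x then 1 else 0)"
      by (rule expectation_est_at_Cons[OF expectation_est_from[OF p r] \<open>x \<noteq> []\<close>])
    have pow: "(1 - p) * (1 - p) ^ (length x - 1) = (1 - p) ^ length x"
      using \<open>x \<noteq> []\<close> by (cases x) auto
    have "measure_pmf.expectation (trace_pmf p (b # s)) (\<lambda>t. est_at r x (drop i t))
        = (1 - p) * ((1 - p) ^ (length x - 1) * (if take (length x) (b # s) = x then 1 else 0))
          + p * ((1 - p) ^ length x * Kfun0 p x s 0)"
      using step Cons.IH[of 0] head by (simp add: 0)
    also have "\<dots> = (1 - p) ^ length x * Kfun0 p x (b # s) i"
      unfolding 0 Kfun0_Cons_0 pow[symmetric] by (simp add: algebra_simps)
    finally show ?thesis .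
  next
    case (Suc j)
    then show ?thesis
      using step Cons.IH[of j] Cons.IH[of i] by (simp add: Kfun0_Cons_Suc algebra_simps)
  qed
qed simp

lemma Kfun_eq_Kfun0:
  assumes "length x = k" "k \<ge> 1" "i \<ge> 1"
  shows "Kfun p k s x i = Kfun0 p x s (i - 1)"
proof -
  define h where "h j = shift_weight p (i - 1) j * (if take k (drop j s) = x then 1 else 0)" for j
  have h0: "h j = 0" if "length s < j + k" for j
    using that assms unfolding h_def by auto
  have "Kfun p k s x i = (\<Sum>j<length s - k + 1. h j)"
    unfolding Kfun_def One_nat_def sum.atLeast1_atMost_eq h_def shift_weight_def substr_def
    using assms by simp
  also have "\<dots> = (\<Sum>j<length s + 1. h j)"
    by (rule sum.mono_neutral_left) (use h0 in auto)
  also have "\<dots> = (\<Sum>j<length s. h j)"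
    by (rule sum.mono_neutral_right) (use h0 assms in auto)
  finally show ?thesis unfolding Kfun0_def h_def using assms by simp
qed

lemma abs_est_at_le:
  assumes "0 \<le> r" "r < 1" "x \<noteq> []"
  shows "\<bar>est_at r x t\<bar> \<le> (1 / (1 - r)) ^ (length x - 1)"
  using \<open>x \<noteq> []\<close>
proof (induction x arbitrary: t)
  case (Cons a z)
  define q where "q = 1 / (1 - r)"
  show ?case
  proof (cases t)
    case (Cons b t')
    show ?thesis
    proof (cases "a = b \<and> z \<noteq> []")
      case True
      have "\<bar>est_from r z t'\<bar> \<le> (\<Sum>e<length t'. \<bar>(-r) ^ e * est_at r z (drop e t')\<bar>)"
        unfolding est_from_def by (rule sum_abs)
      also have "\<dots> \<le> (\<Sum>e<length t'. r ^ e * q ^ (length z - 1))"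
        using Cons.IH True assms unfolding q_def
        by (intro sum_mono) (auto simp: abs_mult power_abs intro!: mult_left_mono)
      also have "\<dots> = (\<Sum>e<length t'. r ^ e) * q ^ (length z - 1)"
        by (simp add: sum_distrib_right)
      also have "\<dots> \<le> q * q ^ (length z - 1)"
      proof (rule mult_right_mono)
        have "(\<Sum>e<length t'. r ^ e) = (1 - r ^ length t') / (1 - r)"
          using assms by (subst sum_gp_strict) auto
        also have "\<dots> \<le> q"
          using assms unfolding q_def by (intro divide_right_mono) auto
        finally show "(\<Sum>e<length t'. r ^ e) \<le> q" .
      qed (use assms in \<open>simp add: q_def\<close>)
      also have "\<dots> = q ^ (length (a # z) - 1)"
        using True by (cases z) auto
      finally show ?thesis using True Cons by (simp add: q_def)
    qed (use Cons assms in auto)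
  qed (use assms in simp)
qed simp

definition K_estimator :: "real \<Rightarrow> nat \<Rightarrow> bool list \<Rightarrow> nat \<Rightarrow> bool list \<Rightarrow> real" where
  "K_estimator p k x i t = est_at (p / (1 - p)) x (drop (i - 1) t) / (1 - p) ^ k"

definition K_estimator_bound :: "real \<Rightarrow> nat \<Rightarrow> real" where
  "K_estimator_bound p k = (1 / (1 - p / (1 - p))) ^ (k - 1) / (1 - p) ^ k"

lemma expectation_K_estimator:
  assumes "0 < p" "p < 1" "length x = k" "k \<ge> 1" "i \<ge> 1"
  shows "measure_pmf.expectation (trace_pmf p s) (K_estimator p k x i) = Kfun p k s x i"
proof -
  have "x \<noteq> []" using assms by auto
  have "measure_pmf.expectation (trace_pmf p s) (K_estimator p k x i)
      = measure_pmf.expectation (trace_pmf p s) (\<lambda>t. est_at (p / (1 - p)) x (drop (i - 1) t))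
        / (1 - p) ^ k"
    unfolding K_estimator_def by simp
  also have "\<dots> = Kfun0 p x s (i - 1)"
    using expectation_est_at_drop[OF assms(1,2) refl \<open>x \<noteq> []\<close>] assms by simp
  finally show ?thesis using Kfun_eq_Kfun0 assms by simp
qed

lemma abs_K_estimator_le:
  assumes "0 < p" "p < 1/2" "length x = k"
  shows "\<bar>K_estimator p k x i t\<bar> \<le> K_estimator_bound p k"
proof (cases "x = []")
  case True
  then show ?thesis using assms by (simp add: K_estimator_def K_estimator_bound_def)
next
  case False
  have "0 \<le> p / (1 - p)" "p / (1 - p) < 1" using assms by (auto simp: field_simps)
  from abs_est_at_le[OF this False] show ?thesis
    using assms unfolding K_estimator_def K_estimator_bound_def
    by (simp add: abs_div divide_right_mono)
qed

lemma K_estimator_bound_pos: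
  assumes "0 < p" "p < 1/2"
  shows "K_estimator_bound p k > 0"
  using assms by (simp add: K_estimator_bound_def field_simps)


section \<open>Concentration over independent traces\<close>

declare traces_pmf.simps(2) [simp del]

lemma nn_integral_exp_traces:
  "(\<integral>\<^sup>+ts. ennreal (exp (l * ((\<Sum>t\<leftarrow>ts. Y t) - real T * \<mu>))) \<partial>traces_pmf p T s)
   = (\<integral>\<^sup>+t. ennreal (exp (l * (Y t - \<mu>))) \<partial>trace_pmf p s) ^ T"
proof (induction T)
  case (Suc T)
  have "(\<integral>\<^sup>+ts. ennreal (exp (l * ((\<Sum>t\<leftarrow>ts. Y t) - real (Suc T) * \<mu>))) \<partial>traces_pmf p (Suc T) s)
     = (\<integral>\<^sup>+t. \<integral>\<^sup>+ts. ennreal (exp (l * (Y t - \<mu>)))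
                     * ennreal (exp (l * ((\<Sum>t\<leftarrow>ts. Y t) - real T * \<mu>)))
          \<partial>traces_pmf p T s \<partial>trace_pmf p s)"
    by (simp add: traces_pmf.simps(2) algebra_simps flip: ennreal_mult exp_add)
  also have "\<dots> = (\<integral>\<^sup>+t. ennreal (exp (l * (Y t - \<mu>))) *
        (\<integral>\<^sup>+t. ennreal (exp (l * (Y t - \<mu>))) \<partial>trace_pmf p s) ^ T \<partial>trace_pmf p s)"
    by (simp add: nn_integral_cmult Suc)
  also have "\<dots> = (\<integral>\<^sup>+t. ennreal (exp (l * (Y t - \<mu>))) \<partial>trace_pmf p s) ^ Suc T"
    by (simp add: nn_integral_multc)
  finally show ?case .
qed simp

text \<open>Hoeffding's inequality for \<open>T\<close> independent traces, via the Chernoff bound with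
  \<open>l = 4 \<epsilon> / (b - a)\<^sup>2\<close> and Hoeffding's lemma for a single trace.\<close>

lemma traces_upper_tail:
  fixes Y :: "bool list \<Rightarrow> real" and p :: real and s :: "bool list"
  assumes Y: "\<And>t. a \<le> Y t" "\<And>t. Y t \<le> b" and "a < b" "\<epsilon> > 0"
  defines "\<mu> \<equiv> measure_pmf.expectation (trace_pmf p s) Y"
  shows "measure_pmf.prob (traces_pmf p T s) {ts. real T * \<epsilon> \<le> (\<Sum>t\<leftarrow>ts. Y t) - real T * \<mu>}
       \<le> exp (- 2 * real T * \<epsilon>\<^sup>2 / (b - a)\<^sup>2)"
proof -
  define d where "d = (b - a)\<^sup>2"
  have "d > 0" using \<open>a < b\<close> by (simp add: d_def)
  define l where "l = 4 * \<epsilon> / d"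
  have "l > 0" using \<open>d > 0\<close> \<open>\<epsilon> > 0\<close> by (simp add: l_def)
  interpret interval_bounded_random_variable "measure_pmf (trace_pmf p s)" Y a b
    by unfold_locales (use Y in auto)
  let ?f = "\<lambda>ts. (\<Sum>t\<leftarrow>ts. Y t) - real T * \<mu>"
  have "ennreal (measure_pmf.prob (traces_pmf p T s) {ts. real T * \<epsilon> \<le> ?f ts})
      = emeasure (measure_pmf (traces_pmf p T s)) {ts \<in> UNIV. real T * \<epsilon> \<le> ?f ts}"
    by (simp add: measure_pmf.emeasure_eq_measure)
  also have "\<dots> \<le> ennreal (exp (- l * (real T * \<epsilon>))) *
      (\<integral>\<^sup>+ts. ennreal (exp (l * ?f ts)) * indicator UNIV ts \<partial>traces_pmf p T s)"
    by (rule Chernoff_ineq_nn_integral_ge[OF \<open>l > 0\<close>]) auto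
  also have "(\<integral>\<^sup>+ts. ennreal (exp (l * ?f ts)) * indicator UNIV ts \<partial>traces_pmf p T s)
      = (\<integral>\<^sup>+t. ennreal (exp (l * (Y t - \<mu>))) \<partial>trace_pmf p s) ^ T"
    by (simp add: nn_integral_exp_traces)
  also have "ennreal (exp (- l * (real T * \<epsilon>))) * \<dots>
      \<le> ennreal (exp (- l * (real T * \<epsilon>))) * ennreal (exp (l\<^sup>2 * (b - a)\<^sup>2 / 8)) ^ T"
    using Hoeffdings_lemma_nn_integral[OF \<open>l > 0\<close>]
    by (intro mult_left_mono power_mono) (auto simp: \<mu>_def)
  also have "\<dots> = ennreal (exp (- l * (real T * \<epsilon>) + real T * (l\<^sup>2 * d / 8)))"
    by (simp add: ennreal_power d_def flip: exp_of_nat_mult ennreal_mult exp_add)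
  also have "- l * (real T * \<epsilon>) + real T * (l\<^sup>2 * d / 8) = - 2 * real T * \<epsilon>\<^sup>2 / (b - a)\<^sup>2"
    using \<open>d > 0\<close> unfolding l_def d_def[symmetric] by (simp add: field_simps power2_eq_square)
  finally show ?thesis by (subst (asm) ennreal_le_iff) auto
qed

lemma traces_mean_deviation:
  fixes Y :: "bool list \<Rightarrow> real" and p :: real and s :: "bool list"
  assumes Y: "\<And>t. \<bar>Y t\<bar> \<le> B" and "B > 0" "\<epsilon> > 0"
  defines "\<mu> \<equiv> measure_pmf.expectation (trace_pmf p s) Y"
  shows "measure_pmf.prob (traces_pmf p T s) {ts. \<epsilon> \<le> \<bar>\<mu> - (\<Sum>t\<leftarrow>ts. Y t) / real T\<bar>}
       \<le> 2 * exp (- real T * \<epsilon>\<^sup>2 / (2 * B\<^sup>2))"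
proof (cases "T = 0")
  case True
  then show ?thesis by (simp add: measure_pmf.prob_le_1 order_trans[OF measure_pmf.prob_le_1])
next
  case False
  let ?M = "traces_pmf p T s"
  have bound: "exp (- 2 * real T * \<epsilon>\<^sup>2 / (B - - B)\<^sup>2) = exp (- real T * \<epsilon>\<^sup>2 / (2 * B\<^sup>2))"
    by (simp add: power2_eq_square field_simps)
  have Y_bounds: "- B \<le> Y t" "Y t \<le> B" "- B \<le> - Y t" "- Y t \<le> B" for t
    using Y[of t] by linarith+
  have "- B < B" using \<open>B > 0\<close> by simp
  have upper: "measure_pmf.prob ?M {ts. real T * \<epsilon> \<le> (\<Sum>t\<leftarrow>ts. Y t) - real T * \<mu>}
      \<le> exp (- real T * \<epsilon>\<^sup>2 / (2 * B\<^sup>2))"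
    using traces_upper_tail[OF Y_bounds(1,2) \<open>- B < B\<close> \<open>\<epsilon> > 0\<close>, where p = p and s = s and T = T]
    unfolding \<mu>_def bound .
  have lower: "measure_pmf.prob ?M {ts. real T * \<epsilon> \<le> (\<Sum>t\<leftarrow>ts. - Y t) - real T * - \<mu>}
      \<le> exp (- real T * \<epsilon>\<^sup>2 / (2 * B\<^sup>2))"
    using traces_upper_tail[OF Y_bounds(3,4) \<open>- B < B\<close> \<open>\<epsilon> > 0\<close>, where p = p and s = s and T = T]
    unfolding \<mu>_def bound by simp
  have sum_list_negf: "(\<Sum>t\<leftarrow>ts. - Y t) = - (\<Sum>t\<leftarrow>ts. Y t)" for ts
    by (induction ts) auto
  have "{ts. \<epsilon> \<le> \<bar>\<mu> - (\<Sum>t\<leftarrow>ts. Y t) / real T\<bar>}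
      \<subseteq> {ts. real T * \<epsilon> \<le> (\<Sum>t\<leftarrow>ts. Y t) - real T * \<mu>}
         \<union> {ts. real T * \<epsilon> \<le> (\<Sum>t\<leftarrow>ts. - Y t) - real T * - \<mu>}"
    using False by (auto simp: abs_le_iff sum_list_negf field_simps)
  then have "measure_pmf.prob ?M {ts. \<epsilon> \<le> \<bar>\<mu> - (\<Sum>t\<leftarrow>ts. Y t) / real T\<bar>}
      \<le> measure_pmf.prob ?M {ts. real T * \<epsilon> \<le> (\<Sum>t\<leftarrow>ts. Y t) - real T * \<mu>}
        + measure_pmf.prob ?M {ts. real T * \<epsilon> \<le> (\<Sum>t\<leftarrow>ts. - Y t) - real T * - \<mu>}"
    by (intro order_trans[OF measure_pmf.finite_measure_mono measure_Un_le]) auto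
  then show ?thesis using upper lower by simp
qed

lemma K_estimate_deviation:
  assumes "0 < p" "p < 1/2" "length x = k" "k \<ge> 1" "i \<ge> 1" "\<epsilon> > 0"
  shows "measure_pmf.prob (traces_pmf p T s)
           {ts. \<epsilon> \<le> \<bar>Kfun p k s x i - (\<Sum>t\<leftarrow>ts. K_estimator p k x i t) / real T\<bar>}
       \<le> 2 * exp (- real T * \<epsilon>\<^sup>2 / (2 * (K_estimator_bound p k)\<^sup>2))"
proof -
  have "\<bar>K_estimator p k x i t\<bar> \<le> K_estimator_bound p k" for t
    using abs_K_estimator_le assms by blast
  from traces_mean_deviation[where Y = "K_estimator p k x i" and p = p and s = s and T = T,
      OF this K_estimator_bound_pos[OF assms(1,2)] \<open>\<epsilon> > 0\<close>]
  show ?thesis using expectation_K_estimator[of p x k i s] assms by simp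
qed


section \<open>Decoding separated candidates\<close>

lemma nearest_candidate_eq:
  fixes F :: "'a \<Rightarrow> 'c \<Rightarrow> real"
  assumes "s \<in> A" and close: "\<forall>c\<in>C. \<bar>F s c - e c\<bar> < \<epsilon>"
    and sep: "\<And>s'. s' \<in> A \<Longrightarrow> s' \<noteq> s \<Longrightarrow> \<exists>c\<in>C. 2 * \<epsilon> \<le> \<bar>F s c - F s' c\<bar>"
  shows "(SOME s'. s' \<in> A \<and> (\<forall>c\<in>C. \<bar>F s' c - e c\<bar> < \<epsilon>)) = s"
proof -
  let ?s' = "SOME s'. s' \<in> A \<and> (\<forall>c\<in>C. \<bar>F s' c - e c\<bar> < \<epsilon>)"
  have s': "?s' \<in> A \<and> (\<forall>c\<in>C. \<bar>F ?s' c - e c\<bar> < \<epsilon>)"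
    by (rule someI[of _ s]) (use assms in auto)
  show ?thesis
  proof (rule ccontr)
    assume "?s' \<noteq> s"
    then obtain c where "c \<in> C" "2 * \<epsilon> \<le> \<bar>F s c - F ?s' c\<bar>"
      using sep s' by blast
    moreover have "\<bar>F s c - e c\<bar> < \<epsilon>" "\<bar>F ?s' c - e c\<bar> < \<epsilon>"
      using close s' \<open>c \<in> C\<close> by auto
    ultimately show False by linarith
  qed
qed

lemma prob_nearest_candidate_ge:
  fixes M :: "'b pmf" and F :: "'a \<Rightarrow> 'c \<Rightarrow> real" and est :: "'b \<Rightarrow> 'c \<Rightarrow> real"
  assumes "finite C" "s \<in> A"
    and sep: "\<And>s'. s' \<in> A \<Longrightarrow> s' \<noteq> s \<Longrightarrow> \<exists>c\<in>C. 2 * \<epsilon> \<le> \<bar>F s c - F s' c\<bar>"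
    and deviation: "\<And>c. c \<in> C \<Longrightarrow> measure_pmf.prob M {y. \<epsilon> \<le> \<bar>F s c - est y c\<bar>} \<le> \<eta>"
  shows "1 - real (card C) * \<eta>
       \<le> measure_pmf.prob M {y. (SOME s'. s' \<in> A \<and> (\<forall>c\<in>C. \<bar>F s' c - est y c\<bar> < \<epsilon>)) = s}"
proof -
  define Bad where "Bad = (\<Union>c\<in>C. {y. \<epsilon> \<le> \<bar>F s c - est y c\<bar>})"
  have "measure_pmf.prob M Bad \<le> (\<Sum>c\<in>C. measure_pmf.prob M {y. \<epsilon> \<le> \<bar>F s c - est y c\<bar>})"
    unfolding Bad_def by (rule measure_pmf.finite_measure_subadditive_finite) (use assms in auto)
  also have "\<dots> \<le> real (card C) * \<eta>"
    using sum_bounded_above[of C _ \<eta>] deviation by simp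
  finally have "1 - real (card C) * \<eta> \<le> measure_pmf.prob M (UNIV - Bad)"
    using measure_pmf.prob_compl[of Bad M] by simp
  also have "\<dots> \<le> measure_pmf.prob M {y. (SOME s'. s' \<in> A \<and> (\<forall>c\<in>C. \<bar>F s' c - est y c\<bar> < \<epsilon>)) = s}"
    using nearest_candidate_eq[where F = F and A = A and C = C and \<epsilon> = \<epsilon>, OF \<open>s \<in> A\<close> _ sep]
    by (intro measure_pmf.finite_measure_mono) (auto simp: Bad_def not_le)
  finally show ?thesis .
qed

lemma K_dist_attained:
  "\<exists>x i. length x = k \<and> i \<in> {1..length s - k + 1}
     \<and> K_dist p k s s' = \<bar>Kfun p k s x i - Kfun p k s' x i\<bar>"
proof -
  let ?P = "{x :: bool list. length x = k} \<times> {1..length s - k + 1}"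
  let ?d = "\<lambda>(x, i). \<bar>Kfun p k s x i - Kfun p k s' x i\<bar>"
  have "finite ?P"
    using finite_lists_length_eq[of "UNIV :: bool set" k] by simp
  moreover have "(replicate k True, 1) \<in> ?P" by simp
  ultimately have "Max (?d ` ?P) \<in> ?d ` ?P" by (intro Max_in finite_imageI) blast+
  moreover have "K_dist p k s s' = Max (?d ` ?P)"
    unfolding K_dist_def by (rule arg_cong[where f = Max], rule set_eqI) (auto simp: image_iff; force)
  ultimately obtain x i where "length x = k" "i \<in> {1..length s - k + 1}"
    and "K_dist p k s s' = \<bar>Kfun p k s x i - Kfun p k s' x i\<bar>"
    by auto
  then show ?thesis by blast
qed

lemma prob_K_decoder_ge:
  fixes A :: "bool list set" and T :: nat
  assumes "0 < p" "p < 1/2" "k \<ge> 1" "\<epsilon> > 0" "s \<in> A" "\<forall>s\<in>A. length s = n"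
    and sep: "\<forall>s'\<in>A. s' \<noteq> s \<longrightarrow> 2 * \<epsilon> \<le> K_dist p k s s'"
  defines "C \<equiv> {x :: bool list. length x = k} \<times> {1..n - k + 1}"
    and "K \<equiv> \<lambda>s (x, i). Kfun p k s x i"
    and "est \<equiv> \<lambda>ts (x, i). (\<Sum>t\<leftarrow>ts. K_estimator p k x i t) / real T"
  shows "1 - real (card C) * (2 * exp (- real T * \<epsilon>\<^sup>2 / (2 * (K_estimator_bound p k)\<^sup>2)))
       \<le> measure_pmf.prob (traces_pmf p T s)
            {ts. (SOME s'. s' \<in> A \<and> (\<forall>c\<in>C. \<bar>K s' c - est ts c\<bar> < \<epsilon>)) = s}"
proof (rule prob_nearest_candidate_ge)
  show "finite C"
    using finite_lists_length_eq[of "UNIV :: bool set" k] by (simp add: C_def)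
next
  fix s' assume "s' \<in> A" "s' \<noteq> s"
  obtain x i where "length x = k" "i \<in> {1..n - k + 1}"
    and "K_dist p k s s' = \<bar>Kfun p k s x i - Kfun p k s' x i\<bar>"
    using K_dist_attained[of k s p s'] assms(5,6) by auto
  moreover have "2 * \<epsilon> \<le> K_dist p k s s'"
    using sep \<open>s' \<in> A\<close> \<open>s' \<noteq> s\<close> by auto
  ultimately show "\<exists>c\<in>C. 2 * \<epsilon> \<le> \<bar>K s c - K s' c\<bar>"
    by (intro bexI[of _ "(x, i)"]) (simp_all add: C_def K_def)
next
  fix c assume "c \<in> C"
  then obtain x i where "c = (x, i)" "length x = k" "i \<ge> 1"
    unfolding C_def by auto
  then show "measure_pmf.prob (traces_pmf p T s) {ts. \<epsilon> \<le> \<bar>K s c - est ts c\<bar>}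
      \<le> 2 * exp (- real T * \<epsilon>\<^sup>2 / (2 * (K_estimator_bound p k)\<^sup>2))"
    using K_estimate_deviation[OF assms(1,2) \<open>length x = k\<close> \<open>k \<ge> 1\<close> \<open>i \<ge> 1\<close> \<open>\<epsilon> > 0\<close>, of T s]
    unfolding K_def est_def by simp
qed (use assms in simp)


section \<open>The sample size\<close>

lemma card_lists_length_bool: "card {x :: bool list. length x = k} = 2 ^ k"
  using card_lists_length_eq[of "UNIV :: bool set" k] by simp

lemma ge_2_if_log_ge_2:
  assumes "real k = c * log 2 (real n)" "k \<ge> 2"
  shows "n \<ge> 2"
proof (rule ccontr)
  assume "\<not> n \<ge> 2"
  then have "n = 0 \<or> n = 1" by auto
  then show False using assms by (auto simp: log_def)
qed

lemma powr_log_eq_power: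
  assumes "n > 0" "y > 0" "real k = c * log 2 n"
  shows "n powr (c * log 2 y) = y ^ k"
proof -
  have "y ^ k = exp (c * (ln n / ln 2) * ln y)"
    using assms by (simp add: powr_realpow[symmetric] powr_def log_def)
  also have "\<dots> = n powr (c * log 2 y)"
    using assms by (simp add: powr_def log_def algebra_simps)
  finally show ?thesis by simp
qed

lemma alpha_c_eq:
  assumes "0 < p" "p < 1/2"
  shows "alpha_c c p = 1 + c * log 2 (1 / (1 - p / (1 - p)))"
proof -
  define r where "r = p / (1 - p)"
  have r: "0 < r" "r < 1" using assms by (auto simp: r_def field_simps)
  have "log 2 ((1 - p) / p) = - log 2 r"
    unfolding r_def using assms by (simp add: log_divide)
  moreover have "(c * bin_entropy (1 - r) + c * log 2 r) / (1 - r) = c * (log 2 r - log 2 (1 - r))"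
    using r by (simp add: bin_entropy_def field_simps)
  ultimately have "alpha_c c p = 1 - c * log 2 (1 - r)"
    unfolding alpha_c_def r_def[symmetric] by (simp add: algebra_simps)
  moreover have "log 2 (1 / (1 - r)) = - log 2 (1 - r)"
    using r by (simp add: log_divide)
  ultimately show ?thesis by (simp add: r_def)
qed

lemma K_estimator_bound_le_f_c:
  assumes "0 < p" "p < 1/2" "real k = c * log 2 (real n)" "n \<ge> 2"
  shows "2 * (K_estimator_bound p k)\<^sup>2 \<le> f_c c p n"
proof -
  define q where "q = 1 / (1 - p / (1 - p))"
  have "q \<ge> 1" using assms by (simp add: q_def field_simps)
  have "0 < 1 - p" using assms by simp
  have n: "real n > 0" using assms by simp
  have "alpha_c c p = 1 + c * log 2 q"
    using alpha_c_eq[OF assms(1,2)] by (simp add: q_def)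
  then have "real n powr alpha_c c p = real n * q ^ k"
    using powr_log_eq_power[OF n _ assms(3), of q] \<open>q \<ge> 1\<close> n by (simp add: powr_add)
  moreover have "real n powr (2 * c * log 2 (1 - p) - 1) = ((1 - p) ^ k)\<^sup>2 / real n"
    using powr_log_eq_power[OF n _ assms(3), of "(1 - p) ^ 2"] \<open>0 < 1 - p\<close> n
    by (simp add: powr_diff log_nat_power mult_ac flip: power_mult)
  ultimately have f_c: "f_c c p n = (1 + 2 * (real n * q ^ k))\<^sup>2 * (real n / 2) / ((1 - p) ^ k)\<^sup>2"
    unfolding f_c_def by simp
  have "2 * (q ^ (k - 1))\<^sup>2 \<le> (2 * q ^ (k - 1))\<^sup>2"
    by (simp add: power_mult_distrib)
  also have "\<dots> \<le> (1 + 2 * (real n * q ^ k))\<^sup>2"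
  proof (rule power_mono)
    have "q ^ (k - 1) \<le> q ^ k" using \<open>q \<ge> 1\<close> by (intro power_increasing) auto
    also have "\<dots> \<le> real n * q ^ k" using assms \<open>q \<ge> 1\<close> by simp
    finally show "2 * q ^ (k - 1) \<le> 1 + 2 * (real n * q ^ k)" by simp
  qed (use \<open>q \<ge> 1\<close> in simp)
  also have "\<dots> \<le> (1 + 2 * (real n * q ^ k))\<^sup>2 * (real n / 2)"
    using mult_left_mono[of 1 "real n / 2" "(1 + 2 * (real n * q ^ k))\<^sup>2"] assms by simp
  finally have "2 * (q ^ (k - 1))\<^sup>2 / ((1 - p) ^ k)\<^sup>2
      \<le> (1 + 2 * (real n * q ^ k))\<^sup>2 * (real n / 2) / ((1 - p) ^ k)\<^sup>2"
    by (rule divide_right_mono) simp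
  then show ?thesis
    unfolding f_c K_estimator_bound_def q_def[symmetric] by (simp add: power_divide)
qed

lemma card_patterns_le:
  assumes "real k = c * log 2 (real n)" "n > 0" "k \<ge> 1"
  shows "real (2 ^ k * (n - k + 1)) \<le> real n powr (1 + c)"
proof -
  have "real (2 ^ k :: nat) = real n powr c"
    using assms by (simp add: powr_realpow[symmetric] powr_def log_def)
  moreover have "real (n - k + 1) \<le> real n" using assms by (simp add: of_nat_diff)
  ultimately have "real (2 ^ k * (n - k + 1)) \<le> real n powr c * real n"
    by (simp only: of_nat_mult) (intro mult_left_mono; simp)
  also have "\<dots> = real n powr (1 + c)" using assms by (simp add: powr_add)
  finally show ?thesis .
qed

lemma union_bound_le:
  assumes "0 < p" "p < 1/2" "0 < c"
    and k: "real k = c * log 2 (real n)" "k \<ge> 2"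
    and "\<epsilon> > 0" "0 < \<delta>" "\<delta> < 1"
    and T: "real T \<ge> ln (2 * real n powr (1 + c) / \<delta>) * \<epsilon> powr (-2) * f_c c p n"
  shows "real (2 ^ k * (n - k + 1)) * (2 * exp (- real T * \<epsilon>\<^sup>2 / (2 * (K_estimator_bound p k)\<^sup>2))) \<le> \<delta>"
proof -
  define B where "B = K_estimator_bound p k"
  define L where "L = ln (2 * real n powr (1 + c) / \<delta>)"
  define N where "N = real (2 ^ k * (n - k + 1))"
  have "n \<ge> 2" using ge_2_if_log_ge_2[OF k] .
  have "B > 0" unfolding B_def using K_estimator_bound_pos assms by blast
  have n_pow: "real n powr (1 + c) \<ge> 1" using \<open>n \<ge> 2\<close> assms by (intro ge_one_powr_ge_zero) auto
  then have "2 * real n powr (1 + c) / \<delta> > 1" using assms by (simp add: field_simps)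
  then have "L > 0" unfolding L_def by simp
  have "L * (2 * B\<^sup>2) / \<epsilon>\<^sup>2 \<le> L * f_c c p n / \<epsilon>\<^sup>2"
    using K_estimator_bound_le_f_c[OF assms(1,2) k(1) \<open>n \<ge> 2\<close>] \<open>L > 0\<close>
    unfolding B_def by (intro divide_right_mono mult_left_mono) auto
  also have "\<dots> \<le> real T"
    using T \<open>\<epsilon> > 0\<close> unfolding L_def by (simp add: powr_minus powr_realpow divide_inverse mult_ac)
  finally have "L \<le> real T * \<epsilon>\<^sup>2 / (2 * B\<^sup>2)"
    using \<open>B > 0\<close> \<open>\<epsilon> > 0\<close> by (simp add: field_simps)
  then have "exp (- real T * \<epsilon>\<^sup>2 / (2 * B\<^sup>2)) \<le> exp (- L)" by simp
  also have "\<dots> = \<delta> / (2 * real n powr (1 + c))"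
    unfolding L_def using n_pow \<open>n \<ge> 2\<close> \<open>0 < \<delta>\<close> by (simp add: exp_minus ln_div exp_diff)
  finally have "2 * exp (- real T * \<epsilon>\<^sup>2 / (2 * B\<^sup>2)) \<le> \<delta> / real n powr (1 + c)"
    by simp
  then have "N * (2 * exp (- real T * \<epsilon>\<^sup>2 / (2 * B\<^sup>2))) \<le> N * (\<delta> / real n powr (1 + c))"
    by (rule mult_left_mono) (simp add: N_def)
  also have "\<dots> \<le> real n powr (1 + c) * (\<delta> / real n powr (1 + c))"
    using card_patterns_le[OF k(1)] \<open>n \<ge> 2\<close> k(2) \<open>0 < \<delta>\<close> unfolding N_def
    by (intro mult_right_mono) auto
  also have "\<dots> = \<delta>" using n_pow \<open>n \<ge> 2\<close> by simp
  finally show ?thesis unfolding N_def B_def .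
qed

theorem corollary1:
  fixes p c \<epsilon> \<delta> :: real and n k T :: nat and A :: "bool list set"
  assumes "0 < p" "p < 1/2" "0 < c"
    and "real k = c * log 2 (real n)" "k \<ge> 2"
    and "\<epsilon> > 0" "0 < \<delta>" "\<delta> < 1"
    and "\<forall>s\<in>A. length s = n"
    and "\<forall>s\<in>A. \<forall>s'\<in>A. s \<noteq> s' \<longrightarrow> K_dist p k s s' \<ge> 2 * \<epsilon>"
    and "real T \<ge> ln (2 * real n powr (1 + c) / \<delta>) * \<epsilon> powr (-2) * f_c c p n"
  shows "\<exists>dec :: bool list list \<Rightarrow> bool list. \<forall>s\<in>A.
           measure_pmf.prob (traces_pmf p T s) {ts. dec ts = s} \<ge> 1 - \<delta>"
proof -
  define C where "C = {x :: bool list. length x = k} \<times> {1..n - k + 1}"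
  define K where "K s = (\<lambda>(x, i). Kfun p k s x i)" for s
  define est where "est ts = (\<lambda>(x, i). (\<Sum>t\<leftarrow>ts. K_estimator p k x i t) / real T)" for ts
  define dec where "dec ts = (SOME s'. s' \<in> A \<and> (\<forall>c\<in>C. \<bar>K s' c - est ts c\<bar> < \<epsilon>))" for ts
  have "real (card C) * (2 * exp (- real T * \<epsilon>\<^sup>2 / (2 * (K_estimator_bound p k)\<^sup>2))) \<le> \<delta>"
    using union_bound_le[OF assms(1-8,11)]
    by (simp add: C_def card_cartesian_product card_lists_length_bool)
  moreover have "1 - real (card C) * (2 * exp (- real T * \<epsilon>\<^sup>2 / (2 * (K_estimator_bound p k)\<^sup>2)))
      \<le> measure_pmf.prob (traces_pmf p T s) {ts. dec ts = s}" if "s \<in> A" for s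
    using prob_K_decoder_ge[of p k \<epsilon> s A n T] assms that unfolding C_def K_def est_def dec_def by auto
  ultimately have "\<forall>s\<in>A. 1 - \<delta> \<le> measure_pmf.prob (traces_pmf p T s) {ts. dec ts = s}"
    by (meson diff_left_mono order_trans)
  then show ?thesis by blast
qed

end
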